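(* Let $p$ be a prime, $q>2$ a power of $p$, and $F$ a field of characteristic $p$ containing $\mathbb{F}_q$ which is a regular extension of $\mathbb{F}_q$. Let $L\in F[x]$ be a $q$-polynomial of $q$-degree $2$ such that $L(x)/x$ is irreducible over $F$, let $E$ be the splitting field of $L$ over $F$, and suppose that the Galois group $G$ of $E$ over $F$, viewed as a subgroup of $GL(2,q)$ via its action on the 2-dimensional $\mathbb{F}_q$-space $V$ of roots of $L$, contains $SL(2,q)$. Let $v_1,v_2$ be an $\mathbb{F}_q$-basis of $V$. Then for every $r\geq1$ the evaluation map $\epsilon_r:H_{2,r}(\mathbb{F}_q)\to E$, $\epsilon_r(P)=P(v_1,v_2)$, is injective.
   Context: $F$ is a regular extension of $\mathbb{F}_q$ means that the only elements of $F$ algebraic over $\mathbb{F}_q$ are those of $\mathbb{F}_q$. $H_{2,r}(\mathbb{F}_q)$ is the space of homogeneous polynomials of degree $r$ in $\mathbb{F}_q[x_1,x_2]$ together with $0$. A $q$-polynomial of $q$-degree $2$ is $a_0x+a_1x^q+a_2x^{q^2}$ with $a_2\neq0$. *)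

theory Defs
  imports "HOL-Computational_Algebra.Polynomial"
begin

text \<open>All fields are realised as subsets of an ambient field of type 'a.\<close>

definition is_subfield :: "'a::field set \<Rightarrow> bool" where
  "is_subfield S \<longleftrightarrow> 0 \<in> S \<and> 1 \<in> S \<and>
     (\<forall>x\<in>S. \<forall>y\<in>S. x + y \<in> S \<and> x - y \<in> S \<and> x * y \<in> S) \<and>
     (\<forall>x\<in>S. x \<noteq> 0 \<longrightarrow> inverse x \<in> S)"

definition poly_over :: "'a::field set \<Rightarrow> 'a poly \<Rightarrow> bool" where
  "poly_over S p \<longleftrightarrow> (\<forall>i. coeff p i \<in> S)"

definition algebraic_over :: "'a::field set \<Rightarrow> 'a \<Rightarrow> bool" where
  "algebraic_over K x \<longleftrightarrow> (\<exists>p. p \<noteq> 0 \<and> poly_over K p \<and> poly p x = 0)"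

definition regular_ext :: "'a::field set \<Rightarrow> 'a set \<Rightarrow> bool" where
  "regular_ext K F \<longleftrightarrow> (\<forall>x\<in>F. algebraic_over K x \<longrightarrow> x \<in> K)"

definition irreducible_over :: "'a::field set \<Rightarrow> 'a poly \<Rightarrow> bool" where
  "irreducible_over F p \<longleftrightarrow> poly_over F p \<and> degree p \<ge> 1 \<and>
     (\<forall>a b. poly_over F a \<longrightarrow> poly_over F b \<longrightarrow> p = a * b \<longrightarrow> degree a = 0 \<or> degree b = 0)"

definition splits_in :: "'a::field set \<Rightarrow> 'a poly \<Rightarrow> bool" where
  "splits_in E p \<longleftrightarrow> (\<exists>c rs. set rs \<subseteq> E \<and> p = smult c (\<Prod>r\<leftarrow>rs. [:-r, 1:]))"

definition splitting_field :: "'a::field set \<Rightarrow> 'a poly \<Rightarrow> 'a set \<Rightarrow> bool" where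
  "splitting_field F p E \<longleftrightarrow> is_subfield E \<and> F \<subseteq> E \<and> splits_in E p \<and>
     E = \<Inter>{K. is_subfield K \<and> F \<union> {x. poly p x = 0} \<subseteq> K}"

definition gal :: "'a::field set \<Rightarrow> 'a set \<Rightarrow> ('a \<Rightarrow> 'a) set" where
  "gal E F = {\<sigma>. bij_betw \<sigma> E E \<and>
     (\<forall>x\<in>E. \<forall>y\<in>E. \<sigma> (x + y) = \<sigma> x + \<sigma> y \<and> \<sigma> (x * y) = \<sigma> x * \<sigma> y) \<and>
     (\<forall>x\<in>F. \<sigma> x = x)}"

definition qpoly2 :: "nat \<Rightarrow> 'a::field \<Rightarrow> 'a \<Rightarrow> 'a \<Rightarrow> 'a poly" where
  "qpoly2 q a0 a1 a2 = monom a0 1 + monom a1 q + monom a2 (q^2)"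

definition qpoly2_div_x :: "nat \<Rightarrow> 'a::field \<Rightarrow> 'a \<Rightarrow> 'a \<Rightarrow> 'a poly" where
  "qpoly2_div_x q a0 a1 a2 = monom a0 0 + monom a1 (q - 1) + monom a2 (q^2 - 1)"

definition is_basis2 :: "'a::field set \<Rightarrow> 'a set \<Rightarrow> 'a \<Rightarrow> 'a \<Rightarrow> bool" where
  "is_basis2 K V v1 v2 \<longleftrightarrow> v1 \<in> V \<and> v2 \<in> V \<and>
     V = {a * v1 + b * v2 | a b. a \<in> K \<and> b \<in> K} \<and>
     (\<forall>a\<in>K. \<forall>b\<in>K. a * v1 + b * v2 = 0 \<longrightarrow> a = 0 \<and> b = 0)"

definition eval_hom :: "nat \<Rightarrow> (nat \<Rightarrow> 'a::field) \<Rightarrow> 'a \<Rightarrow> 'a \<Rightarrow> 'a" where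
  "eval_hom r c v1 v2 = (\<Sum>i\<le>r. c i * v1 ^ i * v2 ^ (r - i))"

end

(* If two coefficient vectors gave the same value, t = v1 / v2 would be a root of a nonzero
   polynomial over F_q, and hence t ^ q ^ m = t for some m > 0. The polynomial
   prod_{k<m} (X - t ^ q ^ k) is then fixed by the q-th power map, so its coefficients lie in F_q,
   and every automorphism of E over F sends t to some t ^ q ^ j. In particular any two of them
   commute on t. But SL(2, q) contains elements acting on t as t + x and as -1 / t; that these
   commute forces t (t + x) = 1 for every nonzero x in F_q, which is impossible for q > 2. *)

theory Submission
  imports Defs "HOL-Computational_Algebra.Primes"
begin

lemma power_char_power_diff:
  assumes "prime CHAR('a::comm_ring_1)" "Q = CHAR('a) ^ n"
  shows "(x - y :: 'a) ^ Q = x ^ Q - y ^ Q"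
  using freshmans_dream'[OF assms, of "x - y" y] by simp

lemma power_char_power_inj:
  assumes "prime CHAR('a::idom)" "Q = CHAR('a) ^ n" "(x::'a) ^ Q = y ^ Q"
  shows "x = y"
  using power_char_power_diff[OF assms(1,2), of x y] assms(3) by simp

lemma power_char_power_minus:
  assumes "prime CHAR('a::comm_ring_1)" "Q = CHAR('a) ^ n"
  shows "(- x :: 'a) ^ Q = - (x ^ Q)"
proof -
  have "Q > 0" using assms prime_gt_0_nat by simp
  then show ?thesis using power_char_power_diff[OF assms, of 0 x] by (simp add: zero_power)
qed

lemma poly_power_char_power:
  fixes p :: "'a::comm_ring_1 poly"
  assumes "prime CHAR('a)" "Q = CHAR('a) ^ n" "\<And>i. coeff p i ^ Q = coeff p i"
  shows "poly p (x ^ Q) = poly p x ^ Q"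
proof -
  have "poly p x ^ Q = (\<Sum>i\<le>degree p. (coeff p i * x ^ i) ^ Q)"
    unfolding poly_altdef by (rule freshmans_dream_sum'[OF assms(1,2)])
  also have "\<dots> = poly p (x ^ Q)"
    unfolding poly_altdef using assms(3)
    by (simp add: power_mult_distrib flip: power_mult) (simp add: mult.commute)
  finally show ?thesis by simp
qed

lemma map_poly_power_char_mult:
  assumes "prime CHAR('a::comm_ring_1)" "Q = CHAR('a) ^ n"
  shows "map_poly (\<lambda>x. x ^ Q) (f * g :: 'a poly) =
           map_poly (\<lambda>x. x ^ Q) f * map_poly (\<lambda>x. x ^ Q) g"
proof (rule poly_eqI)
  fix i
  have "Q > 0" using assms prime_gt_0_nat by simp
  then show "coeff (map_poly (\<lambda>x. x ^ Q) (f * g)) i =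
               coeff (map_poly (\<lambda>x. x ^ Q) f * map_poly (\<lambda>x. x ^ Q) g) i"
    by (simp add: coeff_map_poly coeff_mult freshmans_dream_sum'[OF assms] power_mult_distrib zero_power)
qed

lemma map_poly_power_char_prod_linear:
  fixes m :: nat
  assumes "prime CHAR('a::comm_ring_1)" "Q = CHAR('a) ^ n"
  shows "map_poly (\<lambda>x. x ^ Q) (\<Prod>k<m. [:- a k, 1 :: 'a:]) = (\<Prod>k<m. [:- (a k ^ Q), 1:])"
proof (induction m)
  case (Suc m)
  have "Q > 0" using assms prime_gt_0_nat by simp
  then have "map_poly (\<lambda>x. x ^ Q) [:- a m, 1:] = [:- (a m ^ Q), 1:]"
    by (simp add: map_poly_pCons power_char_power_minus[OF assms] zero_power)
  with Suc show ?case by (simp only: prod.lessThan_Suc map_poly_power_char_mult[OF assms])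
qed simp

text \<open>Since \<open>t ^ Q ^ m = t\<close>, the Frobenius map only shifts the factors cyclically.\<close>

lemma frobenius_orbit_poly_fixed:
  assumes "prime CHAR('a::comm_ring_1)" "Q = CHAR('a) ^ n" "m > 0" "(t::'a) ^ (Q ^ m) = t"
  shows "map_poly (\<lambda>x. x ^ Q) (\<Prod>k<m. [:- (t ^ Q ^ k), 1:]) = (\<Prod>k<m. [:- (t ^ Q ^ k), 1:])"
proof -
  define f where "f k = [:- (t ^ Q ^ k), 1 :: 'a:]" for k
  obtain m' where m': "m = Suc m'" using assms(3) by (cases m) auto
  have "map_poly (\<lambda>x. x ^ Q) (\<Prod>k<m. f k) = (\<Prod>k<m. [:- ((t ^ Q ^ k) ^ Q), 1:])"
    unfolding f_def by (rule map_poly_power_char_prod_linear[OF assms(1,2)])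
  also have "\<dots> = (\<Prod>k<m. f (Suc k))"
    by (simp add: f_def flip: power_mult) (simp add: mult.commute)
  also have "\<dots> = (\<Prod>k<m'. f (Suc k)) * f 0"
    using assms(4) by (simp add: m' f_def)
  also have "\<dots> = (\<Prod>k<m. f k)"
    unfolding m' prod.lessThan_Suc_shift by (rule mult.commute)
  finally show ?thesis by (simp add: f_def)
qed

lemma subfield_zero: "is_subfield S \<Longrightarrow> 0 \<in> S"
  and subfield_one: "is_subfield S \<Longrightarrow> 1 \<in> S"
  and subfield_add: "is_subfield S \<Longrightarrow> x \<in> S \<Longrightarrow> y \<in> S \<Longrightarrow> x + y \<in> S"
  and subfield_diff: "is_subfield S \<Longrightarrow> x \<in> S \<Longrightarrow> y \<in> S \<Longrightarrow> x - y \<in> S"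
  and subfield_mult: "is_subfield S \<Longrightarrow> x \<in> S \<Longrightarrow> y \<in> S \<Longrightarrow> x * y \<in> S"
  unfolding is_subfield_def by blast+

lemma subfield_uminus: "is_subfield S \<Longrightarrow> x \<in> S \<Longrightarrow> - x \<in> S"
  using subfield_diff[of S 0 x] subfield_zero[of S] by simp

lemma subfield_inverse: "is_subfield S \<Longrightarrow> x \<in> S \<Longrightarrow> inverse x \<in> S"
  unfolding is_subfield_def by (metis inverse_zero)

lemma subfield_divide: "is_subfield S \<Longrightarrow> x \<in> S \<Longrightarrow> y \<in> S \<Longrightarrow> x / y \<in> S"
  by (simp add: divide_inverse subfield_mult subfield_inverse)

text \<open>Multiplication by a nonzero \<open>x\<close> permutes \<open>S - {0}\<close>, so \<open>x ^ (card S - 1)\<close> times the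
  product of \<open>S - {0}\<close> equals that product.\<close>

lemma finite_subfield_power_card_eq:
  assumes "is_subfield S" "finite S" "x \<in> S"
  shows "x ^ card S = x"
proof (cases "x = 0")
  case False
  define S' where "S' = S - {0}"
  have "(\<Prod>y\<in>S'. x * y) = (\<Prod>y\<in>S'. y)"
    by (rule prod.reindex_bij_witness[where i = "\<lambda>y. y / x" and j = "\<lambda>y. x * y"])
       (use False assms in \<open>auto simp: S'_def subfield_mult subfield_divide\<close>)
  moreover have "(\<Prod>y\<in>S'. y) \<noteq> 0" using assms(2) by (simp add: S'_def)
  ultimately have "x ^ card S' = 1" by (simp add: prod.distrib)
  moreover have "card S = Suc (card S')"
    using card_Suc_Diff1[OF assms(2) subfield_zero[OF assms(1)]] by (simp add: S'_def)
  ultimately show ?thesis by simp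
qed (use assms in \<open>auto intro: card_gt_0_iff[THEN iffD2]\<close>)

lemma mem_finite_subfield_iff:
  assumes "is_subfield S" "finite S"
  shows "x \<in> S \<longleftrightarrow> x ^ card S = x"
proof
  assume x: "x ^ card S = x"
  define P :: "'a poly" where "P = monom 1 (card S) + [:0, -1:]"
  have "card {0, 1 :: 'a} \<le> card S"
    using assms subfield_zero subfield_one by (intro card_mono) auto
  then have card_S: "card S \<ge> 2" by simp
  then have deg: "degree P = card S"
    unfolding P_def by (subst degree_add_eq_left) (auto simp: degree_monom_eq)
  then have "P \<noteq> 0" using card_S by auto
  have "insert x S \<subseteq> {y. poly P y = 0}"
    using x finite_subfield_power_card_eq[OF assms] by (auto simp: P_def poly_monom)
  then have "card (insert x S) \<le> card {y. poly P y = 0}"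
    using poly_roots_finite[OF \<open>P \<noteq> 0\<close>] by (rule card_mono[rotated])
  also have "\<dots> \<le> card S"
    using card_poly_roots_bound[OF \<open>P \<noteq> 0\<close>] deg by simp
  finally show "x \<in> S" using assms(2) by (auto simp: card_insert_if split: if_splits)
qed (use finite_subfield_power_card_eq[OF assms] in auto)

lemma poly_over_pCons: "poly_over S (pCons a p) \<longleftrightarrow> a \<in> S \<and> poly_over S p"
  unfolding poly_over_def by (metis coeff_pCons_0 coeff_pCons_Suc not0_implies_Suc)

lemma subfield_poly: "is_subfield S \<Longrightarrow> poly_over S p \<Longrightarrow> x \<in> S \<Longrightarrow> poly p x \<in> S"
  by (induction p) (auto simp: poly_over_pCons subfield_zero subfield_add subfield_mult)

lemma gal_add: "\<sigma> \<in> gal E F \<Longrightarrow> x \<in> E \<Longrightarrow> y \<in> E \<Longrightarrow> \<sigma> (x + y) = \<sigma> x + \<sigma> y"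
  and gal_mult: "\<sigma> \<in> gal E F \<Longrightarrow> x \<in> E \<Longrightarrow> y \<in> E \<Longrightarrow> \<sigma> (x * y) = \<sigma> x * \<sigma> y"
  and gal_fixed: "\<sigma> \<in> gal E F \<Longrightarrow> x \<in> F \<Longrightarrow> \<sigma> x = x"
  unfolding gal_def by blast+

lemma gal_mono: "K \<subseteq> F \<Longrightarrow> gal E F \<subseteq> gal E K"
  unfolding gal_def by blast

lemma gal_zero:
  assumes "is_subfield E" "\<sigma> \<in> gal E F"
  shows "\<sigma> 0 = 0"
proof -
  have "\<sigma> 0 + \<sigma> 0 = \<sigma> 0" using gal_add[OF assms(2), of 0 0] subfield_zero[OF assms(1)] by simp
  then show ?thesis by (metis add_cancel_right_right)
qed

lemma gal_one:
  assumes "is_subfield E" "\<sigma> \<in> gal E F"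
  shows "\<sigma> 1 = 1"
proof -
  have "inj_on \<sigma> E" using assms(2) by (simp add: gal_def bij_betw_def)
  then have "\<sigma> 1 \<noteq> \<sigma> 0"
    using subfield_zero[OF assms(1)] subfield_one[OF assms(1)] by (auto dest: inj_onD)
  moreover have "\<sigma> 1 * \<sigma> 1 = \<sigma> 1"
    using gal_mult[OF assms(2), of 1 1] subfield_one[OF assms(1)] by simp
  ultimately show ?thesis using gal_zero[OF assms] by simp
qed

lemma gal_uminus:
  assumes "is_subfield E" "\<sigma> \<in> gal E F" "x \<in> E"
  shows "\<sigma> (- x) = - \<sigma> x"
  using gal_add[OF assms(2,3) subfield_uminus[OF assms(1,3)]] gal_zero[OF assms(1,2)]
  by (simp add: eq_neg_iff_add_eq_0 add.commute)

lemma gal_inverse: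
  assumes "is_subfield E" "\<sigma> \<in> gal E F" "x \<in> E"
  shows "\<sigma> (inverse x) = inverse (\<sigma> x)"
proof (cases "x = 0")
  case False
  then have "\<sigma> x * \<sigma> (inverse x) = 1"
    using gal_mult[OF assms(2,3) subfield_inverse[OF assms(1,3)]] gal_one[OF assms(1,2)] by simp
  then show ?thesis by (metis inverse_unique)
qed (use gal_zero[OF assms(1,2)] in simp)

lemma gal_divide:
  assumes "is_subfield E" "\<sigma> \<in> gal E F" "x \<in> E" "y \<in> E"
  shows "\<sigma> (x / y) = \<sigma> x / \<sigma> y"
  using assms by (simp add: divide_inverse gal_mult gal_inverse subfield_inverse)

lemma gal_power:
  assumes "is_subfield E" "\<sigma> \<in> gal E F" "x \<in> E"
  shows "\<sigma> (x ^ n) = \<sigma> x ^ n"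
proof (induction n)
  case (Suc n)
  have "x ^ n \<in> E" using assms by (induction n) (auto simp: subfield_one subfield_mult)
  with Suc show ?case using assms by (simp add: gal_mult)
qed (use gal_one[OF assms(1,2)] in simp)

lemma gal_poly:
  assumes "is_subfield E" "\<sigma> \<in> gal E F" "F \<subseteq> E" "poly_over F p" "x \<in> E"
  shows "\<sigma> (poly p x) = poly p (\<sigma> x)"
  using assms(4)
proof (induction p)
  case (pCons a p)
  have "a \<in> F" and p_over: "poly_over F p" using pCons.prems by (auto simp: poly_over_pCons)
  moreover have "poly p x \<in> E"
    using p_over assms(1,3,5) by (intro subfield_poly) (auto simp: poly_over_def)
  ultimately show ?case
    using pCons.IH[OF p_over] assms by (auto simp: gal_add gal_mult gal_fixed subfield_mult)
qed (use gal_zero[OF assms(1,2)] in simp)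

lemma algebraic_over_finite_subfield_periodic:
  fixes K :: "'a::field set"
  assumes "prime CHAR('a)" "card K = CHAR('a) ^ n" "is_subfield K" "algebraic_over K t"
  shows "\<exists>m>0. t ^ (card K ^ m) = t"
proof -
  define Q where "Q = card K"
  have "Q > 0" using assms(1,2) prime_gt_0_nat by (simp add: Q_def)
  then have "finite K" by (simp add: Q_def card_ge_0_finite)
  obtain p where p: "p \<noteq> 0" "poly_over K p" "poly p t = 0"
    using assms(4) by (auto simp: algebraic_over_def)
  have "coeff p i ^ Q = coeff p i" for i
    using p(2) mem_finite_subfield_iff[OF assms(3) \<open>finite K\<close>] by (simp add: Q_def poly_over_def)
  then have frobenius_root: "poly p (x ^ Q) = 0" if "poly p x = 0" for x
    using poly_power_char_power[OF assms(1) assms(2)[folded Q_def]] that \<open>Q > 0\<close> by simp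
  have roots: "poly p (t ^ (Q ^ k)) = 0" for k
  proof (induction k)
    case (Suc k)
    have "t ^ (Q ^ Suc k) = (t ^ (Q ^ k)) ^ Q" by (metis power_Suc2 power_mult)
    then show ?case using frobenius_root[OF Suc] by simp
  qed (simp add: p(3))
  have "finite (range (\<lambda>k. t ^ (Q ^ k)))"
    using roots by (intro finite_subset[OF _ poly_roots_finite[OF p(1)]]) auto
  then have "\<not> inj (\<lambda>k. t ^ (Q ^ k))"
    using finite_imageD[of _ "UNIV :: nat set"] by auto
  then obtain k l where "k < l" "t ^ (Q ^ k) = t ^ (Q ^ l)"
    unfolding inj_def by (metis linorder_neqE_nat)
  moreover have "t ^ (Q ^ l) = (t ^ (Q ^ (l - k))) ^ (Q ^ k)"
    using \<open>k < l\<close> by (simp flip: power_mult power_add add: mult.commute)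
  ultimately have "t ^ (Q ^ k) = (t ^ (Q ^ (l - k))) ^ (Q ^ k)" by simp
  moreover have "Q ^ k = CHAR('a) ^ (n * k)" using assms(2) by (simp add: Q_def power_mult)
  ultimately have "t = t ^ (Q ^ (l - k))" using power_char_power_inj[OF assms(1)] by blast
  then show ?thesis using \<open>k < l\<close> unfolding Q_def by (intro exI[of _ "l - k"]) auto
qed

text \<open>The orbit polynomial of \<open>t\<close> under the Frobenius map has coefficients in \<open>K\<close>, so every
  automorphism fixing \<open>K\<close> sends \<open>t\<close> to one of its roots.\<close>

lemma gal_maps_into_frobenius_orbit:
  fixes K :: "'a::field set"
  assumes "prime CHAR('a)" "card K = CHAR('a) ^ n" "is_subfield K" "is_subfield E"
    "K \<subseteq> E" "\<sigma> \<in> gal E K" "t \<in> E" "algebraic_over K t"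
  shows "\<exists>j. \<sigma> t = t ^ (card K ^ j)"
proof -
  define Q where "Q = card K"
  have "Q > 0" using assms(1,2) prime_gt_0_nat by (simp add: Q_def)
  then have "finite K" by (simp add: Q_def card_ge_0_finite)
  obtain m where m: "m > 0" "t ^ (Q ^ m) = t"
    using algebraic_over_finite_subfield_periodic[OF assms(1-3,8)] by (auto simp: Q_def)
  define h where "h = (\<Prod>k<m. [:- (t ^ Q ^ k), 1:])"
  have "coeff h i ^ Q = coeff h i" for i
    using arg_cong[OF frobenius_orbit_poly_fixed[OF assms(1) assms(2)[folded Q_def] m], of "\<lambda>p. coeff p i"]
      \<open>Q > 0\<close> by (simp add: h_def coeff_map_poly)
  then have "poly_over K h"
    using mem_finite_subfield_iff[OF assms(3) \<open>finite K\<close>] by (simp add: poly_over_def Q_def)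
  have poly_h: "poly h x = (\<Prod>k<m. x - t ^ Q ^ k)" for x
    by (simp add: h_def poly_prod)
  have "poly h t = 0"
    unfolding poly_h using m(1) by (intro prod_zero bexI[of _ 0]) auto
  then have "poly h (\<sigma> t) = 0"
    using gal_poly[OF assms(4,6,5) \<open>poly_over K h\<close> assms(7)] gal_zero[OF assms(4,6)] by simp
  then obtain k where "\<sigma> t = t ^ Q ^ k" unfolding poly_h by auto
  then show ?thesis unfolding Q_def by blast
qed

lemma gal_commute_on_algebraic:
  fixes K :: "'a::field set"
  assumes "prime CHAR('a)" "card K = CHAR('a) ^ n" "is_subfield K" "is_subfield E"
    "K \<subseteq> E" "\<sigma> \<in> gal E K" "\<tau> \<in> gal E K" "t \<in> E" "algebraic_over K t"
  shows "\<sigma> (\<tau> t) = \<tau> (\<sigma> t)"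
proof -
  obtain i j where i: "\<sigma> t = t ^ (card K ^ i)" and j: "\<tau> t = t ^ (card K ^ j)"
    using gal_maps_into_frobenius_orbit[OF assms(1-5) _ assms(8,9)] assms(6,7) by meson
  have "\<sigma> (\<tau> t) = (t ^ card K ^ i) ^ card K ^ j"
    using gal_power[OF assms(4,6,8)] by (simp add: i j)
  also have "\<dots> = (t ^ card K ^ j) ^ card K ^ i"
    by (simp flip: power_mult add: mult.commute)
  also have "\<dots> = \<tau> (\<sigma> t)"
    using gal_power[OF assms(4,7,8)] by (simp add: i j)
  finally show ?thesis .
qed

lemma eval_hom_eq_poly_ratio:
  fixes v1 v2 :: "'a::field"
  assumes "v2 \<noteq> 0"
  shows "eval_hom r c v1 v2 = poly (\<Sum>i\<le>r. monom (c i) i) (v1 / v2) * v2 ^ r"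
  unfolding eval_hom_def poly_sum poly_monom sum_distrib_right
proof (rule sum.cong)
  fix i assume "i \<in> {..r}"
  then have "v2 ^ r = v2 ^ i * v2 ^ (r - i)" by (simp flip: power_add)
  then show "c i * v1 ^ i * v2 ^ (r - i) = c i * (v1 / v2) ^ i * v2 ^ r"
    using assms by (simp add: power_divide)
qed simp

lemma eval_hom_inj_if_ratio_not_algebraic:
  assumes "is_subfield K" "v2 \<noteq> 0" "\<not> algebraic_over K (v1 / v2)"
    and "\<forall>i\<le>r. c i \<in> K" "\<forall>i\<le>r. c' i \<in> K"
    and "eval_hom r c v1 v2 = eval_hom r c' v1 v2" "i \<le> r"
  shows "c i = c' i"
proof -
  define p where "p = (\<Sum>i\<le>r. monom (c i - c' i) i)"
  have coeff_p: "coeff p j = (if j \<le> r then c j - c' j else 0)" for j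
    by (simp add: p_def coeff_sum)
  have "poly_over K p"
    using assms(4,5) subfield_zero[OF assms(1)] subfield_diff[OF assms(1)]
    by (simp add: poly_over_def coeff_p)
  have p_diff: "p = (\<Sum>i\<le>r. monom (c i) i) - (\<Sum>i\<le>r. monom (c' i) i)"
    by (simp add: p_def flip: diff_monom sum_subtractf)
  have "poly p (v1 / v2) * v2 ^ r = eval_hom r c v1 v2 - eval_hom r c' v1 v2"
    unfolding p_diff by (simp add: eval_hom_eq_poly_ratio[OF assms(2)] algebra_simps)
  then have "poly p (v1 / v2) = 0" using assms(2,6) by simp
  then have "p = 0"
    using assms(3) \<open>poly_over K p\<close> unfolding algebraic_over_def by blast
  then show ?thesis using coeff_p[of i] assms(7) by simp
qed

text \<open>On \<open>t = v1 / v2\<close> the matrices \<open>((1, 0), (x, 1))\<close> and \<open>((0, 1), (-1, 0))\<close> of \<open>SL(2, q)\<close> act as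
  \<open>t \<mapsto> t + x\<close> and \<open>t \<mapsto> -1 / t\<close>; these two maps commute on \<open>t\<close> only if \<open>t (t + x) = 1\<close>.\<close>

lemma basis_ratio_not_algebraic:
  fixes Fq F E :: "'a::field set" and v1 v2 :: 'a
  assumes "prime CHAR('a)" "card Fq = CHAR('a) ^ n" "card Fq > 2"
    and "is_subfield Fq" "is_subfield E" "Fq \<subseteq> F" "F \<subseteq> E" "v1 \<in> E" "v2 \<in> E"
    and indep: "\<forall>a\<in>Fq. \<forall>b\<in>Fq. a * v1 + b * v2 = 0 \<longrightarrow> a = 0 \<and> b = 0"
    and SL2: "\<forall>a\<in>Fq. \<forall>b\<in>Fq. \<forall>c\<in>Fq. \<forall>d\<in>Fq. a * d - b * c = 1 \<longrightarrow>
           (\<exists>\<sigma>\<in>gal E F. \<sigma> v1 = a * v1 + c * v2 \<and> \<sigma> v2 = b * v1 + d * v2)"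
  shows "\<not> algebraic_over Fq (v1 / v2)"
proof
  assume algebraic: "algebraic_over Fq (v1 / v2)"
  define t where "t = v1 / v2"
  have Fq_0: "0 \<in> Fq" and Fq_1: "1 \<in> Fq" and Fq_m1: "- 1 \<in> Fq"
    using assms(4) by (auto simp: subfield_zero subfield_one subfield_uminus)
  have "v1 \<noteq> 0" "v2 \<noteq> 0" using indep Fq_0 Fq_1 by force+
  have "t \<in> E" unfolding t_def using assms(5,8,9) by (rule subfield_divide)
  have "t \<noteq> 0" using \<open>v1 \<noteq> 0\<close> \<open>v2 \<noteq> 0\<close> by (simp add: t_def)
  have t_plus: "t + x \<noteq> 0" if "x \<in> Fq" for x
  proof
    assume "t + x = 0"
    then have "1 * v1 + x * v2 = 0" using \<open>v2 \<noteq> 0\<close> by (simp add: t_def field_simps)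
    then show False using indep that Fq_1 by auto
  qed
  have commute: "\<sigma> (\<tau> t) = \<tau> (\<sigma> t)" if "\<sigma> \<in> gal E F" "\<tau> \<in> gal E F" for \<sigma> \<tau>
  proof (rule gal_commute_on_algebraic[OF assms(1,2,4,5)])
    show "Fq \<subseteq> E" using assms(6,7) by blast
    show "\<sigma> \<in> gal E Fq" "\<tau> \<in> gal E Fq" using that gal_mono[OF assms(6)] by auto
  qed (use \<open>t \<in> E\<close> algebraic in \<open>simp_all add: t_def\<close>)
  obtain \<tau> where \<tau>: "\<tau> \<in> gal E F" "\<tau> v1 = - v2" "\<tau> v2 = v1"
    using SL2[rule_format, OF Fq_0 Fq_1 Fq_m1 Fq_0] by auto
  have \<tau>_t: "\<tau> t = - 1 / t"
    using gal_divide[OF assms(5) \<tau>(1) assms(8,9)] \<tau> \<open>v1 \<noteq> 0\<close> by (simp add: t_def)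
  have t_quadratic: "t * (t + x) = 1" if x: "x \<in> Fq" "x \<noteq> 0" for x
  proof -
    obtain \<sigma> where \<sigma>: "\<sigma> \<in> gal E F" "\<sigma> v1 = v1 + x * v2" "\<sigma> v2 = v2"
      using SL2[rule_format, OF Fq_1 Fq_0 x(1) Fq_1] by auto
    have "x \<in> F" "x \<in> E" using x(1) assms(6,7) by auto
    have \<sigma>_t: "\<sigma> t = t + x"
      using gal_divide[OF assms(5) \<sigma>(1) assms(8,9)] \<sigma> \<open>v2 \<noteq> 0\<close> by (simp add: t_def field_simps)
    have "\<sigma> (\<tau> t) = - 1 / (t + x)"
      using gal_divide[OF assms(5) \<sigma>(1), of "- 1" t] gal_uminus[OF assms(5) \<sigma>(1), of 1]
        gal_one[OF assms(5) \<sigma>(1)] subfield_one[OF assms(5)] \<open>t \<in> E\<close>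
      by (simp add: \<tau>_t \<sigma>_t subfield_uminus[OF assms(5)])
    moreover have "\<tau> (\<sigma> t) = - 1 / t + x"
      using gal_add[OF \<tau>(1) \<open>t \<in> E\<close>, of x] gal_fixed[OF \<tau>(1), of x] \<open>x \<in> F\<close> \<open>x \<in> E\<close>
      by (simp add: \<sigma>_t \<tau>_t)
    ultimately have "- 1 / (t + x) = - 1 / t + x" using commute[OF \<sigma>(1) \<tau>(1)] by simp
    then have "x * (t * (t + x) - 1) = 0"
      using \<open>t \<noteq> 0\<close> t_plus[OF x(1)] by (simp add: field_simps)
    then show ?thesis using x(2) by simp
  qed
  have "\<not> Fq \<subseteq> {0, 1}"
    using card_mono[of "{0, 1}" Fq] assms(3) by (auto simp: card_insert_if)
  then obtain x where x: "x \<in> Fq" "x \<noteq> 0" "x \<noteq> 1" by blast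
  have "t * (x - 1) = t * (t + x) - t * (t + 1)" by (simp add: algebra_simps)
  also have "\<dots> = 0" using t_quadratic[OF x(1,2)] t_quadratic[OF Fq_1] by simp
  finally show False using \<open>t \<noteq> 0\<close> x(3) by simp
qed

theorem theorem7p11:
  fixes p q :: nat and Fq F E :: "'a::field set" and a0 a1 a2 v1 v2 :: 'a
  assumes "prime p" and "\<exists>n>0. q = p ^ n" and "q > 2"
    and "CHAR('a) = p"
    and "is_subfield Fq" and "card Fq = q"
    and "is_subfield F" and "Fq \<subseteq> F" and "regular_ext Fq F"
    and "a0 \<in> F" and "a1 \<in> F" and "a2 \<in> F" and "a2 \<noteq> 0"
    and "irreducible_over F (qpoly2_div_x q a0 a1 a2)"
    and "splitting_field F (qpoly2 q a0 a1 a2) E"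
    and "is_basis2 Fq {x. poly (qpoly2 q a0 a1 a2) x = 0} v1 v2"
    and "\<forall>a\<in>Fq. \<forall>b\<in>Fq. \<forall>c\<in>Fq. \<forall>d\<in>Fq. a * d - b * c = 1 \<longrightarrow>
           (\<exists>\<sigma>\<in>gal E F. \<sigma> v1 = a * v1 + c * v2 \<and> \<sigma> v2 = b * v1 + d * v2)"
    and "r \<ge> 1"
  shows "\<forall>c c'. (\<forall>i\<le>r. c i \<in> Fq) \<longrightarrow> (\<forall>i\<le>r. c' i \<in> Fq) \<longrightarrow>
           eval_hom r c v1 v2 = eval_hom r c' v1 v2 \<longrightarrow> (\<forall>i\<le>r. c i = c' i)"
proof -
  obtain n where card_Fq: "card Fq = CHAR('a) ^ n" using assms(2,4,6) by blast
  define V where "V = {x. poly (qpoly2 q a0 a1 a2) x = 0}"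
  have "is_subfield E" "F \<subseteq> E" "V \<subseteq> E"
    using assms(15) by (auto simp: splitting_field_def V_def)
  moreover have "v1 \<in> V" "v2 \<in> V" and indep: "\<forall>a\<in>Fq. \<forall>b\<in>Fq. a * v1 + b * v2 = 0 \<longrightarrow> a = 0 \<and> b = 0"
    using assms(16) by (auto simp: is_basis2_def V_def)
  ultimately have "\<not> algebraic_over Fq (v1 / v2)"
    using basis_ratio_not_algebraic[OF _ card_Fq _ assms(5) _ assms(8) _ _ _ indep assms(17)]
      assms(1,3,4,6) by auto
  moreover have "v2 \<noteq> 0" using indep subfield_zero[OF assms(5)] subfield_one[OF assms(5)] by force
  ultimately show ?thesis using eval_hom_inj_if_ratio_not_algebraic[OF assms(5)] by blast
qed

end
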